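(* Let $(P,\le,\mu,\gamma)$ be a preordered heap with target multiplication $\tau(a,b)=\gamma(\mu(\gamma a,\gamma b))$. For $a,x\in P$ define $a/x=\tau(a,\gamma x)$ and $x\backslash a=\tau(\gamma x,a)$. Then for all $a,x,y\in P$: $y\le a/x$ if and only if $x\le y\backslash a$.
   Context: A preordered heap is a structure $(P,\le,\mu,\gamma)$ where $(P,\le)$ is a preorder (reflexive and transitive relation); $\mu\colon P\times P\to P$ (source multiplication) is monotonic in both arguments; $\gamma\colon P\to P$ (involution) is antitone ($a\le b\Rightarrow \gamma b\le\gamma a$); and the following axioms hold: (A1) $\gamma(\gamma(a))=a$ for all $a$; (A2a) $\mu(a,\gamma(\mu(\gamma b,a)))\le b$ for all $a,b\in P$; (A2b) $\mu(\gamma(\mu(a,\gamma b)),a)\le b$ for all $a,b\in P$. *)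

theory Defs
  imports Main
begin

definition preordered_heap ::
  "('a \<Rightarrow> 'a \<Rightarrow> bool) \<Rightarrow> ('a \<Rightarrow> 'a \<Rightarrow> 'a) \<Rightarrow> ('a \<Rightarrow> 'a) \<Rightarrow> bool" where
  "preordered_heap le mu gamma \<longleftrightarrow>
     (\<forall>a. le a a) \<and>
     (\<forall>a b c. le a b \<longrightarrow> le b c \<longrightarrow> le a c) \<and>
     (\<forall>a a' b b'. le a a' \<longrightarrow> le b b' \<longrightarrow> le (mu a b) (mu a' b')) \<and>
     (\<forall>a b. le a b \<longrightarrow> le (gamma b) (gamma a)) \<and>
     (\<forall>a. gamma (gamma a) = a) \<and>
     (\<forall>a b. le (mu a (gamma (mu (gamma b) a))) b) \<and>
     (\<forall>a b. le (mu (gamma (mu a (gamma b))) a) b)"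

definition target_mult :: "('a \<Rightarrow> 'a \<Rightarrow> 'a) \<Rightarrow> ('a \<Rightarrow> 'a) \<Rightarrow> 'a \<Rightarrow> 'a \<Rightarrow> 'a" where
  "target_mult mu gamma a b = gamma (mu (gamma a) (gamma b))"

definition rdiv :: "('a \<Rightarrow> 'a \<Rightarrow> 'a) \<Rightarrow> ('a \<Rightarrow> 'a) \<Rightarrow> 'a \<Rightarrow> 'a \<Rightarrow> 'a" where
  "rdiv mu gamma a x = target_mult mu gamma a (gamma x)"

definition ldiv :: "('a \<Rightarrow> 'a \<Rightarrow> 'a) \<Rightarrow> ('a \<Rightarrow> 'a) \<Rightarrow> 'a \<Rightarrow> 'a \<Rightarrow> 'a" where
  "ldiv mu gamma x a = target_mult mu gamma (gamma x) a"

end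

theory Submission
  imports Defs
begin

text \<open>Since \<open>\<gamma>\<close> is an antitone involution, \<open>x \<le> \<gamma> z\<close> and \<open>z \<le> \<gamma> x\<close> are equivalent;
  both sides of the claim unfold to statements of the form \<open>_ \<le> \<gamma> (\<mu> _ _)\<close>, and axioms
  (A2b) and (A2a) move the outer factor across \<open>\<gamma>\<close> in the two directions.\<close>

locale preord_heap =
  fixes le :: "'a \<Rightarrow> 'a \<Rightarrow> bool" and mu :: "'a \<Rightarrow> 'a \<Rightarrow> 'a" and gamma :: "'a \<Rightarrow> 'a"
  assumes preordered_heap: "preordered_heap le mu gamma"
begin

lemma refl: "le a a"
  and trans: "le a b \<Longrightarrow> le b c \<Longrightarrow> le a c"
  and mult_mono: "le a a' \<Longrightarrow> le b b' \<Longrightarrow> le (mu a b) (mu a' b')"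
  and gamma_antitone: "le a b \<Longrightarrow> le (gamma b) (gamma a)"
  and gamma_gamma [simp]: "gamma (gamma a) = a"
  and A2a: "le (mu a (gamma (mu (gamma b) a))) b"
  and A2b: "le (mu (gamma (mu a (gamma b))) a) b"
  using preordered_heap unfolding preordered_heap_def by blast+

lemma le_gamma_commute: "le x (gamma z) \<longleftrightarrow> le z (gamma x)"
  using gamma_antitone by fastforce

lemma mult_left_le_gamma: "le y (gamma (mu c x)) \<Longrightarrow> le (mu y c) (gamma x)"
  using trans[OF mult_mono[OF _ refl] A2b[of c "gamma x", simplified]] by blast

lemma mult_right_le_gamma: "le x (gamma (mu y c)) \<Longrightarrow> le (mu c x) (gamma y)"
  using trans[OF mult_mono[OF refl] A2a[of c "gamma y", simplified]] by blast

lemma le_gamma_mult_iff: "le y (gamma (mu c x)) \<longleftrightarrow> le x (gamma (mu y c))"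
  using mult_left_le_gamma mult_right_le_gamma le_gamma_commute by blast

lemma rdiv_eq: "rdiv mu gamma a x = gamma (mu (gamma a) x)"
  by (simp add: rdiv_def target_mult_def)

lemma ldiv_eq: "ldiv mu gamma y a = gamma (mu y (gamma a))"
  by (simp add: ldiv_def target_mult_def)

lemma le_rdiv_iff_le_ldiv: "le y (rdiv mu gamma a x) \<longleftrightarrow> le x (ldiv mu gamma y a)"
  unfolding rdiv_eq ldiv_eq by (rule le_gamma_mult_iff)

end

theorem mainTheorem2:
  fixes le :: "'a \<Rightarrow> 'a \<Rightarrow> bool" and mu :: "'a \<Rightarrow> 'a \<Rightarrow> 'a" and gamma :: "'a \<Rightarrow> 'a"
  assumes "preordered_heap le mu gamma"
  shows "\<forall>a x y. le y (rdiv mu gamma a x) \<longleftrightarrow> le x (ldiv mu gamma y a)"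
proof -
  interpret preord_heap le mu gamma
    using assms by unfold_locales
  show ?thesis
    using le_rdiv_iff_le_ldiv by blast
qed

end
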